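(* For $d\in[6.74,7.5]$, $|\Psi_d'(x)|<1$ for all $x\in[\frac38,\frac12]$.
   Context: $\Psi_d=\dot\Psi\circ\hat\Psi$ with $\hat\Psi(x)=\frac{1-2x^{2}}{1-x^{2}}$ and $\dot\Psi(v)=\frac{1-v^{d-1}}{2-v^{d-1}}$ ($d$ real). *)

theory Defs
  imports "HOL-Analysis.Analysis"
begin

definition Psi_hat :: "real \<Rightarrow> real" where
  "Psi_hat x = (1 - 2 * x\<^sup>2) / (1 - x\<^sup>2)"

definition Psi_dot :: "real \<Rightarrow> real \<Rightarrow> real" where
  "Psi_dot d v = (1 - v powr (d - 1)) / (2 - v powr (d - 1))"

definition Psi :: "real \<Rightarrow> real \<Rightarrow> real" where
  "Psi d = Psi_dot d \<circ> Psi_hat"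

end

theory Submission
  imports Defs
begin

(* With v = Psi_hat x and w = v^(d-1), the chain rule gives
   Psi_d'(x) = (d-1) w/(2-w)^2 * 2x/((1-x^2)(1-2x^2)) > 0.
   Since v <= Psi_hat(3/8) = 46/55 and ln(55/46) > 7/40, the map a |-> a v^a decreases for
   a >= 40/7, and so does v^a; hence Psi_d'(x) <= Psi_{47/7}'(x) for every d >= 47/7. The one-variable bound Psi_{47/7}'(x) < 1 is checked on four
   subintervals of [3/8, 1/2], on each of which v is bounded by its value at the left end
   point and the remaining factors by their values at the right end point. *)

definition log_slope :: "real \<Rightarrow> real" where
  "log_slope x = 2 * x / ((1 - x\<^sup>2) * (1 - 2 * x\<^sup>2))"

text \<open>\<^term>\<open>log_slope\<close> is the derivative of \<^term>\<open>\<lambda>x. - ln (Psi_hat x)\<close>.\<close>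

definition Psi_deriv :: "real \<Rightarrow> real \<Rightarrow> real" where
  "Psi_deriv d x =
     (d - 1) * Psi_hat x powr (d - 1) / (2 - Psi_hat x powr (d - 1))\<^sup>2 * log_slope x"

lemma Psi_hat_eq: "x\<^sup>2 \<noteq> 1 \<Longrightarrow> Psi_hat x = 2 - 1 / (1 - x\<^sup>2)"
  unfolding Psi_hat_def by (simp add: field_simps)

lemma Psi_hat_antimono:
  fixes x y :: real
  assumes "0 \<le> y" "y \<le> x" "x\<^sup>2 < 1"
  shows "Psi_hat x \<le> Psi_hat y"
proof -
  have squares: "y\<^sup>2 \<le> x\<^sup>2" using assms by (intro power_mono) auto
  have "y\<^sup>2 < 1" using squares assms by linarith
  then have "0 < (1 - y\<^sup>2) * (1 - x\<^sup>2)" using assms by simp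
  then have "1 / (1 - y\<^sup>2) \<le> 1 / (1 - x\<^sup>2)"
    using squares by (intro divide_left_mono) auto
  moreover from \<open>y\<^sup>2 < 1\<close> assms have "x\<^sup>2 \<noteq> 1" "y\<^sup>2 \<noteq> 1" by auto
  ultimately show ?thesis by (simp add: Psi_hat_eq)
qed

lemma Psi_hat_pos:
  fixes x :: real
  assumes "2 * x\<^sup>2 < 1"
  shows "0 < Psi_hat x"
  using assms unfolding Psi_hat_def by (auto simp: field_simps)

lemma Psi_hat_less_1:
  fixes x :: real
  assumes "x \<noteq> 0" "x\<^sup>2 < 1"
  shows "Psi_hat x < 1"
  using assms unfolding Psi_hat_def by (auto simp: field_simps)

lemma log_slope_nonneg: "0 \<le> x \<Longrightarrow> 2 * x\<^sup>2 < 1 \<Longrightarrow> 0 \<le> log_slope x"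
  unfolding log_slope_def by (intro divide_nonneg_nonneg mult_nonneg_nonneg) auto

lemma log_slope_mono:
  fixes x y :: real
  assumes "0 \<le> x" "x \<le> y" "2 * y\<^sup>2 < 1"
  shows "log_slope x \<le> log_slope y"
proof -
  have squares: "x\<^sup>2 \<le> y\<^sup>2" using assms by (intro power_mono) auto
  have "(1 - y\<^sup>2) * (1 - 2 * y\<^sup>2) \<le> (1 - x\<^sup>2) * (1 - 2 * x\<^sup>2)"
    using assms squares by (intro mult_mono) linarith+
  moreover have "0 < (1 - y\<^sup>2) * (1 - 2 * y\<^sup>2)" using assms by simp
  ultimately show ?thesis unfolding log_slope_def using assms by (intro frac_le) auto
qed

lemma has_real_derivative_Psi_hat:
  fixes x :: real
  assumes "x\<^sup>2 \<noteq> 1"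
  shows "(Psi_hat has_real_derivative (- 2 * x / (1 - x\<^sup>2)\<^sup>2)) (at x)"
  unfolding Psi_hat_def[abs_def]
  by (rule derivative_eq_intros refl)+ (use assms in \<open>auto simp: field_simps power2_eq_square\<close>)

lemma has_real_derivative_Psi_dot:
  fixes d v :: real
  assumes "0 < v" "v powr (d - 1) \<noteq> 2"
  shows "(Psi_dot d has_real_derivative
           (- (d - 1) * v powr (d - 2) / (2 - v powr (d - 1))\<^sup>2)) (at v)"
  unfolding Psi_dot_def[abs_def]
  by (rule derivative_eq_intros refl assms)+ (use assms in \<open>auto simp: field_simps power2_eq_square\<close>)

lemma has_real_derivative_Psi:
  fixes d x :: real
  assumes "1 \<le> d" "x \<noteq> 0" "2 * x\<^sup>2 < 1"
  shows "(Psi d has_real_derivative Psi_deriv d x) (at x)"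
proof -
  define v where "v = Psi_hat x"
  define w where "w = v powr (d - 1)"
  have v: "0 < v" "v < 1" using assms Psi_hat_pos Psi_hat_less_1 unfolding v_def by auto
  have w: "w \<le> 1" unfolding w_def using v assms powr_mono'[of 0 "d - 1" v] by simp
  have "(Psi d has_real_derivative
      (- (d - 1) * v powr (d - 2) / (2 - w)\<^sup>2) * (- 2 * x / (1 - x\<^sup>2)\<^sup>2)) (at x)"
    unfolding Psi_def v_def w_def
    by (intro DERIV_chain has_real_derivative_Psi_dot has_real_derivative_Psi_hat)
       (use v w assms in \<open>auto simp: v_def w_def\<close>)
  moreover have "v powr (d - 2) = w / v" unfolding w_def using v powr_diff[of v "d - 1" 1] by simp
  then have "(- (d - 1) * v powr (d - 2) / (2 - w)\<^sup>2) * (- 2 * x / (1 - x\<^sup>2)\<^sup>2)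
      = (d - 1) * w / (2 - w)\<^sup>2 * (2 * x / ((v * (1 - x\<^sup>2)) * (1 - x\<^sup>2)))"
    by (simp add: field_simps power2_eq_square minus_divide_left del: divide_minus_left)
  moreover have "v * (1 - x\<^sup>2) = 1 - 2 * x\<^sup>2" using assms by (simp add: v_def Psi_hat_def)
  ultimately show ?thesis
    unfolding Psi_deriv_def log_slope_def v_def w_def by (simp add: mult.commute)
qed

lemma Psi_deriv_nonneg:
  fixes d x :: real
  assumes "1 \<le> d" "0 < x" "2 * x\<^sup>2 < 1"
  shows "0 \<le> Psi_deriv d x"
  using assms Psi_hat_pos[of x] Psi_hat_less_1[of x] log_slope_nonneg[of x]
  unfolding Psi_deriv_def by (simp add: powr_le1)

lemma mult_powr_exponent_antimono:
  fixes a q v :: real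
  assumes "0 < q" "q \<le> a" "0 < v" "ln v \<le> - 1 / q"
  shows "a * v powr a \<le> q * v powr q"
proof -
  have "a / q \<le> exp (a / q - 1)" using exp_ge_add_one_self[of "a / q - 1"] by simp
  also have "\<dots> \<le> exp ((q - a) * ln v)"
  proof -
    have "(a - q) * (1 / q + ln v) \<le> 0" using assms by (intro mult_nonneg_nonpos) auto
    then show ?thesis using assms by (simp add: field_simps)
  qed
  finally have ratio: "a / q \<le> exp ((q - a) * ln v)" .
  have "v powr a = v powr q * exp ((a - q) * ln v)"
    using assms by (simp add: powr_def algebra_simps flip: exp_add)
  then have "a * v powr a = q * v powr q * (a / q * exp ((a - q) * ln v))"
    using assms by (simp add: field_simps)
  also have "\<dots> \<le> q * v powr q * (exp ((q - a) * ln v) * exp ((a - q) * ln v))"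
    using assms ratio by (intro mult_left_mono mult_right_mono) auto
  also have "\<dots> = q * v powr q" by (simp add: algebra_simps flip: exp_add)
  finally show ?thesis .
qed

lemma divide_two_minus_square_mono:
  fixes s u :: real
  assumes "0 \<le> s" "s \<le> u" "u < 2"
  shows "s / (2 - s)\<^sup>2 \<le> u / (2 - u)\<^sup>2"
proof -
  have "s * u \<le> 2 * 2" using assms by (intro mult_mono) auto
  then have "0 \<le> (u - s) * (4 - s * u)" using assms by (intro mult_nonneg_nonneg) auto
  also have "\<dots> = u * (2 - s)\<^sup>2 - s * (2 - u)\<^sup>2" by (simp add: algebra_simps power2_eq_square)
  finally have "s * (2 - u)\<^sup>2 \<le> u * (2 - s)\<^sup>2" by simp
  then show ?thesis
    using assms by (subst frac_le_eq) (auto intro!: divide_nonpos_pos)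
qed

lemma Psi_deriv_antimono:
  fixes d d0 x :: real
  assumes "0 < x" "2 * x\<^sup>2 < 1" "1 < d0" "d0 \<le> d" "ln (Psi_hat x) \<le> - 1 / (d0 - 1)"
  shows "Psi_deriv d x \<le> Psi_deriv d0 x"
proof -
  define v where "v = Psi_hat x"
  have v: "0 < v" "v < 1" using assms Psi_hat_pos Psi_hat_less_1 unfolding v_def by auto
  have "(d - 1) * v powr (d - 1) \<le> (d0 - 1) * v powr (d0 - 1)"
    by (rule mult_powr_exponent_antimono) (use assms v in \<open>auto simp: v_def\<close>)
  moreover have "v powr (d - 1) \<le> v powr (d0 - 1)" using assms v by (intro powr_mono') auto
  moreover have "v powr (d0 - 1) \<le> 1" using assms v by (intro powr_le1) auto
  ultimately have "(d - 1) * v powr (d - 1) / (2 - v powr (d - 1))\<^sup>2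
      \<le> (d0 - 1) * v powr (d0 - 1) / (2 - v powr (d0 - 1))\<^sup>2"
    using assms v by (intro frac_le power_mono) auto
  then show ?thesis
    unfolding Psi_deriv_def v_def[symmetric]
    using assms log_slope_nonneg[of x] by (intro mult_right_mono) auto
qed

lemma ln_46_55_le: "ln (46 / 55 :: real) \<le> - 7 / 40"
proof -
  have "exp (7 / 320 :: real) * (1 - 7 / 320) \<le> exp (7 / 320) * exp (- 7 / 320)"
    using exp_ge_add_one_self[of "- 7 / 320 :: real"] by (intro mult_left_mono) auto
  then have "exp (7 / 320 :: real) \<le> 320 / 313" by (simp flip: exp_add)
  then have "exp (7 / 320 :: real) ^ 8 \<le> (320 / 313) ^ 8" by (intro power_mono) auto
  also have "\<dots> \<le> 55 / 46" by (simp add: power_divide)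
  finally have "exp (7 / 40 :: real) \<le> 55 / 46" by (simp flip: exp_of_nat_mult)
  then have "46 / 55 \<le> exp (- 7 / 40 :: real)" by (simp add: exp_minus field_simps)
  then show ?thesis using ln_mono[of "46 / 55" "exp (- 7 / 40 :: real)"] by simp
qed

text \<open>The bound \<open>U\<^sup>7 \<ge> Psi_hat x1 ^ 40\<close> says \<open>U \<ge> Psi_hat x1 powr (40/7)\<close>; it is stated
  with natural powers so that, for concrete end points, it is decided by exact rational arithmetic.\<close>

lemma Psi_deriv_47_7_le:
  fixes x x1 x2 U :: real
  assumes "0 < x1" "x1 \<le> x" "x \<le> x2" "2 * x2\<^sup>2 < 1"
    and "Psi_hat x1 ^ 40 \<le> U ^ 7" "0 \<le> U" "U < 2"
  shows "Psi_deriv (47 / 7) x \<le> 40 / 7 * U / (2 - U)\<^sup>2 * log_slope x2"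
proof -
  define v where "v = Psi_hat x"
  define s where "s = v powr (40 / 7)"
  have "x\<^sup>2 \<le> x2\<^sup>2" using assms by (intro power_mono) auto
  then have x: "0 < x" "2 * x\<^sup>2 < 1" using assms(1,2,4) by linarith+
  have v: "0 < v" "v \<le> Psi_hat x1"
    using x assms Psi_hat_pos Psi_hat_antimono[of x1 x] unfolding v_def by auto
  have "s ^ 7 = v powr real 40" using v by (simp add: s_def powr_power)
  also have "\<dots> = v ^ 40" using v by (intro powr_realpow)
  also have "\<dots> \<le> Psi_hat x1 ^ 40" using v by (intro power_mono) auto
  finally have "s ^ Suc 6 \<le> U ^ Suc 6" using assms by simp
  then have "s \<le> U" using \<open>0 \<le> U\<close> by (rule power_le_imp_le_base)
  then have "40 / 7 * s / (2 - s)\<^sup>2 \<le> 40 / 7 * U / (2 - U)\<^sup>2"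
    using assms divide_two_minus_square_mono[of s U] by (simp add: s_def)
  moreover have "0 \<le> log_slope x" "log_slope x \<le> log_slope x2"
    using x assms by (auto intro: log_slope_nonneg log_slope_mono)
  ultimately have "40 / 7 * s / (2 - s)\<^sup>2 * log_slope x \<le> 40 / 7 * U / (2 - U)\<^sup>2 * log_slope x2"
    using assms by (intro mult_mono) auto
  then show ?thesis by (simp add: Psi_deriv_def s_def v_def)
qed

lemma Psi_deriv_47_7_less_1:
  fixes x :: real
  assumes "3 / 8 \<le> x" "x \<le> 1 / 2"
  shows "Psi_deriv (47 / 7) x < 1"
proof -
  consider "x \<le> 386 / 1000" | "386 / 1000 \<le> x" "x \<le> 406 / 1000"
    | "406 / 1000 \<le> x" "x \<le> 441 / 1000" | "441 / 1000 \<le> x"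
    by linarith
  then show ?thesis
  proof cases
    case 1
    show ?thesis
      by (rule le_less_trans[OF Psi_deriv_47_7_le[of "3 / 8" x "386 / 1000" "361 / 1000"]])
         (use assms 1 in \<open>simp_all add: Psi_hat_def log_slope_def power_divide\<close>)
  next
    case 2
    show ?thesis
      by (rule le_less_trans[OF Psi_deriv_47_7_le[of "386 / 1000" x "406 / 1000" "333 / 1000"]])
         (use 2 in \<open>simp_all add: Psi_hat_def log_slope_def power_divide\<close>)
  next
    case 3
    show ?thesis
      by (rule le_less_trans[OF Psi_deriv_47_7_le[of "406 / 1000" x "441 / 1000" "285 / 1000"]])
         (use 3 in \<open>simp_all add: Psi_hat_def log_slope_def power_divide\<close>)
  next
    case 4
    show ?thesis
      by (rule le_less_trans[OF Psi_deriv_47_7_le[of "441 / 1000" x "1 / 2" "207 / 1000"]])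
         (use assms 4 in \<open>simp_all add: Psi_hat_def log_slope_def power_divide\<close>)
  qed
qed

theorem lemma4p3:
  fixes d x :: real
  assumes "6.74 \<le> d" "d \<le> 7.5"
      and "3/8 \<le> x" "x \<le> 1/2"
  shows "\<exists>D. (Psi d has_real_derivative D) (at x) \<and> \<bar>D\<bar> < 1"
proof -
  have "x\<^sup>2 \<le> (1 / 2)\<^sup>2" using assms by (intro power_mono) auto
  then have x: "0 < x" "2 * x\<^sup>2 < 1" using assms by (simp_all add: power_divide)
  have "Psi_hat x \<le> Psi_hat (3 / 8)" using assms x by (intro Psi_hat_antimono) auto
  then have "ln (Psi_hat x) \<le> ln (46 / 55)"
    using x Psi_hat_pos by (simp add: Psi_hat_def power_divide)
  also have "\<dots> \<le> - 1 / (47 / 7 - 1)" using ln_46_55_le by simp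
  finally have "Psi_deriv d x \<le> Psi_deriv (47 / 7) x"
    using assms x by (intro Psi_deriv_antimono) auto
  also have "\<dots> < 1" using assms(3,4) by (rule Psi_deriv_47_7_less_1)
  finally have "Psi_deriv d x < 1" .
  moreover have "0 \<le> Psi_deriv d x" using assms x by (intro Psi_deriv_nonneg) auto
  ultimately show ?thesis using has_real_derivative_Psi[of d x] assms x by auto
qed

end
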